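(* Let $q$ be a prime power, $m$ odd, $3\le n\le m$, let $g_1,\dots,g_n\in\mathbb{F}_{q^m}$ be linearly independent over $\mathbb{F}_q$, and let $\mathcal{G}$ be the Gabidulin code of dimension $k=1$ with respect to $g_1,\dots,g_n$. Let $f(x)=x^{q^2}+cx$ with $c\in\mathbb{F}_{q^m}$. Then $\sigma_f=(f(g_1),\dots,f(g_n))$ is a deep hole of $\mathcal{G}$ in the rank metric, i.e. $d_R(\sigma_f,\mathcal{G})=n-1$.
   Context: $\mathcal{L}_q(x,\mathbb{F}_{q^m})$ is the set of $q$-linearized polynomials $\sum_i a_ix^{q^i}$ with $a_i\in\mathbb{F}_{q^m}$, $q$-degree being the largest $i$ with $a_i\ne0$. Rank distance: $d_R(\mathbf{u},\mathbf{v})=\dim_{\mathbb{F}_q}\langle u_1-v_1,\dots,u_n-v_n\rangle$, $d_R(\mathbf{u},C)=\min_{\mathbf{c}\in C}d_R(\mathbf{u},\mathbf{c})$; a deep hole is a word attaining the covering radius $\max_{\mathbf{u}}d_R(\mathbf{u},C)$, which for $\mathcal{G}$ is $n-k$. The Gabidulin code of dimension $k$ is $\mathcal{G}=\{(v(g_1),\dots,v(g_n)) : v\in\mathcal{L}_q(x,\mathbb{F}_{q^m}),\ v=0\text{ or }\deg_q(v)<k\}$; for $k=1$ this is $\{(\lambda g_1,\dots,\lambda g_n):\lambda\in\mathbb{F}_{q^m}\}$. *)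

theory Defs
  imports "HOL-Computational_Algebra.Primes"
begin

text \<open>The ambient field F_{q^m} is a finite field type 'a; the base field F_q is
  a subfield K of 'a with card K = q, and CARD('a) = q^m.\<close>

definition is_subfield :: "'a::field set \<Rightarrow> bool" where
  "is_subfield K \<longleftrightarrow> 0 \<in> K \<and> 1 \<in> K \<and>
     (\<forall>x\<in>K. \<forall>y\<in>K. x + y \<in> K \<and> x * y \<in> K) \<and>
     (\<forall>x\<in>K. - x \<in> K \<and> inverse x \<in> K)"

definition kspan :: "'a::field set \<Rightarrow> 'a set \<Rightarrow> 'a set" where
  "kspan K S = {(\<Sum>s\<in>B. a s * s) | B a. finite B \<and> B \<subseteq> S \<and> (\<forall>s\<in>B. a s \<in> K)}"

definition kindep :: "'a::field set \<Rightarrow> 'a set \<Rightarrow> bool" where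
  "kindep K B \<longleftrightarrow> finite B \<and>
     (\<forall>a. (\<forall>b\<in>B. a b \<in> K) \<and> (\<Sum>b\<in>B. a b * b) = 0 \<longrightarrow> (\<forall>b\<in>B. a b = 0))"

definition kdim :: "'a::field set \<Rightarrow> 'a set \<Rightarrow> nat" where
  "kdim K V = (THE d. \<exists>B. B \<subseteq> V \<and> kindep K B \<and> kspan K B = V \<and> card B = d)"

definition kindep_family :: "'a::field set \<Rightarrow> nat \<Rightarrow> (nat \<Rightarrow> 'a) \<Rightarrow> bool" where
  "kindep_family K n g \<longleftrightarrow>
     (\<forall>a. (\<forall>i<n. a i \<in> K) \<and> (\<Sum>i<n. a i * g i) = 0 \<longrightarrow> (\<forall>i<n. a i = 0))"

text \<open>Words of length n are functions nat => 'a, only indices i < n matter.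
  Rank distance d_R(u,v) = dim_K <u_1 - v_1, ..., u_n - v_n>.\<close>
definition rank_dist :: "'a::field set \<Rightarrow> nat \<Rightarrow> (nat \<Rightarrow> 'a) \<Rightarrow> (nat \<Rightarrow> 'a) \<Rightarrow> nat" where
  "rank_dist K n u v = kdim K (kspan K ((\<lambda>i. u i - v i) ` {..<n}))"

definition gabidulin :: "nat \<Rightarrow> nat \<Rightarrow> nat \<Rightarrow> (nat \<Rightarrow> 'a::field) \<Rightarrow> (nat \<Rightarrow> 'a) set" where
  "gabidulin q n k g = {(\<lambda>i. \<Sum>j<k. a j * g i ^ (q ^ j)) | a. True}"

definition rank_dist_code :: "'a::field set \<Rightarrow> nat \<Rightarrow> (nat \<Rightarrow> 'a) \<Rightarrow> (nat \<Rightarrow> 'a) set \<Rightarrow> nat" where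
  "rank_dist_code K n u C = Min (rank_dist K n u ` C)"

end

theory Submission
  imports Defs "HOL-Computational_Algebra.Polynomial" "HOL-Number_Theory.Residues"
begin

text \<open>
  For every \<open>x\<close>, the word \<open>\<sigma>_f - x g\<close> is the evaluation at \<open>g_1, ..., g_n\<close> of the
  \<open>F_q\<close>-linear map \<open>L_a(z) = z^(q^2) + a z\<close> with \<open>a = c - x\<close>, so its rank is the dimension
  of \<open>L_a(V)\<close>, \<open>V = <g_1, ..., g_n>\<close>. If \<open>z_0 \<noteq> 0\<close> is a root of \<open>L_a\<close>, every root is
  \<open>z_0 t\<close> with \<open>t^(q^2) = t\<close>; as also \<open>t^(q^m) = t\<close> and \<open>m\<close> is odd, \<open>t^q = t\<close>. So the
  kernel of \<open>L_a\<close> has at most \<open>q\<close> elements and the rank is at least \<open>n - 1\<close>, while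
  \<open>a = -g_1^(q^2 - 1)\<close> puts \<open>g_1\<close> into the kernel.
\<close>

lemma subfield_sum_closed:
  assumes "is_subfield K" "\<And>i. i \<in> I \<Longrightarrow> f i \<in> K"
  shows "sum f I \<in> K"
  using assms(2)
  by (induct I rule: infinite_finite_induct) (use assms(1) in \<open>auto simp: is_subfield_def\<close>)

lemma subfield_add_closed: "is_subfield K \<Longrightarrow> x \<in> K \<Longrightarrow> y \<in> K \<Longrightarrow> x + y \<in> K"
  unfolding is_subfield_def by blast

lemma subfield_diff_closed: "is_subfield K \<Longrightarrow> x \<in> K \<Longrightarrow> y \<in> K \<Longrightarrow> x - y \<in> K"
  unfolding is_subfield_def by (metis diff_conv_add_uminus)

lemma subfield_mult_closed: "is_subfield K \<Longrightarrow> x \<in> K \<Longrightarrow> y \<in> K \<Longrightarrow> x * y \<in> K"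
  unfolding is_subfield_def by blast

lemma subfield_uminus_closed: "is_subfield K \<Longrightarrow> x \<in> K \<Longrightarrow> - x \<in> K"
  unfolding is_subfield_def by blast

lemma subfield_inverse_closed: "is_subfield K \<Longrightarrow> x \<in> K \<Longrightarrow> inverse x \<in> K"
  unfolding is_subfield_def by blast

lemma one_less_card_subfield:
  fixes K :: "'a::{finite,field} set"
  assumes "is_subfield K" shows "1 < card K"
proof -
  have "{0, 1} \<subseteq> K" using assms unfolding is_subfield_def by auto
  then have "card {0, 1::'a} \<le> card K" by (intro card_mono) auto
  then show ?thesis by simp
qed

lemma subfield_power_card:
  fixes K :: "'a::{finite,field} set"
  assumes K: "is_subfield K" and k: "k \<in> K"
  shows "k ^ card K = k"
proof (cases "k = 0")
  case True then show ?thesis using one_less_card_subfield[OF K] by simp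
next
  case False
  have "(\<Prod>y\<in>K-{0}. k * y) = (\<Prod>y\<in>K-{0}. y)"
  proof (rule prod.reindex_bij_witness[of _ "\<lambda>y. y * inverse k" "\<lambda>y. k * y"])
    fix y assume "y \<in> K - {0}"
    then show "k * y * inverse k = y" "k * y \<in> K - {0}" "y * inverse k \<in> K - {0}"
      "k * (y * inverse k) = y"
      using False subfield_mult_closed[OF K] subfield_inverse_closed[OF K k] k by auto
  qed simp
  moreover have "card (K - {0}) = card K - 1"
    using K unfolding is_subfield_def by (simp add: card_Diff_singleton)
  ultimately have "k ^ (card K - 1) * (\<Prod>y\<in>K-{0}. y) = 1 * (\<Prod>y\<in>K-{0}. y)"
    by (simp add: prod.distrib)
  then have "k ^ (card K - 1) = 1" by (subst (asm) mult_cancel_right) simp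
  moreover have "card K = Suc (card K - 1)" using one_less_card_subfield[OF K] by simp
  ultimately show ?thesis by (metis power_Suc mult_1_right)
qed

lemma power_card_UNIV: "(x::'a::{finite,field}) ^ card (UNIV :: 'a set) = x"
  by (rule subfield_power_card) (auto simp: is_subfield_def)

lemma kspan_image_eq:
  assumes K: "is_subfield K" and fin: "finite I"
  shows "kspan K (h ` I) = {(\<Sum>i\<in>I. a i * h i) | a. \<forall>i\<in>I. a i \<in> K}"
proof (rule equalityI; rule subsetI)
  fix x assume "x \<in> kspan K (h ` I)"
  then obtain B b where x: "x = (\<Sum>s\<in>B. b s * s)" and B: "finite B" "B \<subseteq> h ` I"
    and bK: "\<forall>s\<in>B. b s \<in> K" unfolding kspan_def by blast
  define J where "J = inv_into I h ` B"
  have JI: "J \<subseteq> I" using B unfolding J_def by (auto intro: inv_into_into)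
  define a where "a i = (if i \<in> J then b (h i) else 0)" for i
  have "(\<Sum>i\<in>I. a i * h i) = (\<Sum>i\<in>I. if i \<in> J then b (h i) * h i else 0)"
    unfolding a_def by (intro sum.cong) auto
  also have "\<dots> = (\<Sum>i\<in>J. b (h i) * h i)"
    using sum.inter_restrict[OF fin, of "\<lambda>i. b (h i) * h i" J] JI by (simp add: Int_absorb1)
  also have "\<dots> = (\<Sum>s\<in>B. b (h (inv_into I h s)) * h (inv_into I h s))"
    unfolding J_def using B by (subst sum.reindex) (auto intro: inj_on_inv_into)
  also have "\<dots> = x" unfolding x using B by (intro sum.cong) (auto simp: f_inv_into_f)
  finally have "x = (\<Sum>i\<in>I. a i * h i)" ..
  moreover have "\<forall>i\<in>I. a i \<in> K"
    using bK K B unfolding a_def J_def is_subfield_def by (auto simp: f_inv_into_f)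
  ultimately show "x \<in> {(\<Sum>i\<in>I. a i * h i) | a. \<forall>i\<in>I. a i \<in> K}" by blast
next
  fix x assume "x \<in> {(\<Sum>i\<in>I. a i * h i) | a. \<forall>i\<in>I. a i \<in> K}"
  then obtain a where x: "x = (\<Sum>i\<in>I. a i * h i)" and aK: "\<forall>i\<in>I. a i \<in> K" by blast
  define b where "b s = (\<Sum>i\<in>{i\<in>I. h i = s}. a i)" for s
  have "x = (\<Sum>s\<in>h ` I. \<Sum>i\<in>{i\<in>I. h i = s}. a i * h i)"
    unfolding x using fin by (rule sum.image_gen)
  also have "\<dots> = (\<Sum>s\<in>h ` I. b s * s)"
    unfolding b_def sum_distrib_right by (intro sum.cong refl) auto
  finally have "x = (\<Sum>s\<in>h ` I. b s * s)" .
  moreover have "\<forall>s\<in>h ` I. b s \<in> K"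
    unfolding b_def using aK by (auto intro!: subfield_sum_closed[OF K])
  ultimately show "x \<in> kspan K (h ` I)" unfolding kspan_def using fin by blast
qed

lemma kspan_finite_eq:
  "is_subfield K \<Longrightarrow> finite Y \<Longrightarrow> kspan K Y = {(\<Sum>y\<in>Y. a y * y) | a. \<forall>y\<in>Y. a y \<in> K}"
  using kspan_image_eq[of K Y "\<lambda>y. y"] by simp

lemma kspan_mono: "X \<subseteq> Y \<Longrightarrow> kspan K X \<subseteq> kspan K Y"
  unfolding kspan_def by blast

lemma kspan_superset:
  assumes "is_subfield K" shows "X \<subseteq> kspan K X"
proof
  fix x assume "x \<in> X"
  then show "x \<in> kspan K X"
    using assms unfolding kspan_def is_subfield_def
    by (intro CollectI exI[of _ "{x}"] exI[of _ "\<lambda>_. 1"]) auto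
qed

lemma kspan_zero: "0 \<in> kspan K Y"
  unfolding kspan_def by (intro CollectI exI[of _ "{}"]) simp

lemma kspan_sum_closed:
  fixes Y :: "'a::{finite,field} set"
  assumes K: "is_subfield K" and "\<And>i. i \<in> I \<Longrightarrow> a i \<in> K" "\<And>i. i \<in> I \<Longrightarrow> x i \<in> kspan K Y"
  shows "(\<Sum>i\<in>I. a i * x i) \<in> kspan K Y"
  using assms(2,3)
proof (induct I rule: infinite_finite_induct)
  case (infinite I)
  then show ?case using kspan_zero by simp
next
  case empty
  then show ?case using kspan_zero by simp
next
  case (insert i I)
  have "(\<Sum>j\<in>I. a j * x j) \<in> kspan K Y" using insert.hyps(3) insert.prems by simp
  then obtain b where b: "(\<Sum>j\<in>I. a j * x j) = (\<Sum>y\<in>Y. b y * y)" "\<forall>y\<in>Y. b y \<in> K"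
    unfolding kspan_finite_eq[OF K finite] by blast
  have "x i \<in> kspan K Y" using insert.prems by simp
  then obtain c where c: "x i = (\<Sum>y\<in>Y. c y * y)" "\<forall>y\<in>Y. c y \<in> K"
    unfolding kspan_finite_eq[OF K finite] by blast
  have "(\<Sum>j\<in>insert i I. a j * x j) = (\<Sum>y\<in>Y. (a i * c y + b y) * y)"
    using insert.hyps by (simp add: b(1) c(1) sum_distrib_left sum.distrib distrib_right mult.assoc)
  moreover have "\<forall>y\<in>Y. a i * c y + b y \<in> K"
    using insert.prems b(2) c(2) by (auto intro!: subfield_add_closed[OF K] subfield_mult_closed[OF K])
  ultimately show ?case
    unfolding kspan_finite_eq[OF K finite] by (intro CollectI exI[of _ "\<lambda>y. a i * c y + b y"] conjI)
qed

lemma kspan_subset_kspan: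
  fixes Y :: "'a::{finite,field} set"
  assumes K: "is_subfield K" and "X \<subseteq> kspan K Y"
  shows "kspan K X \<subseteq> kspan K Y"
proof
  fix x assume "x \<in> kspan K X"
  then obtain a where "x = (\<Sum>y\<in>X. a y * y)" "\<forall>y\<in>X. a y \<in> K"
    using kspan_finite_eq[OF K finite, of X] by blast
  then show "x \<in> kspan K Y" using assms(2) by (auto intro!: kspan_sum_closed[OF K])
qed

lemma exists_kindep_spanning_subset:
  fixes S :: "'a::{finite,field} set"
  assumes K: "is_subfield K"
  shows "\<exists>B. B \<subseteq> S \<and> kindep K B \<and> kspan K B = kspan K S"
proof -
  define P where "P B \<longleftrightarrow> B \<subseteq> S \<and> kspan K B = kspan K S" for B
  obtain B where PB: "P B" and min: "\<And>B'. P B' \<Longrightarrow> card B \<le> card B'"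
    using ex_has_least_nat[of P S card] unfolding P_def by blast
  have "kindep K B"
    unfolding kindep_def
  proof (intro conjI finite allI impI ballI, rule ccontr)
    fix a b0 assume a: "(\<forall>b\<in>B. a b \<in> K) \<and> (\<Sum>b\<in>B. a b * b) = 0" and b0: "b0 \<in> B"
      and nz: "a b0 \<noteq> 0"
    have eq: "a b0 * b0 = - (\<Sum>b\<in>B - {b0}. a b * b)"
      using a b0 by (simp add: sum.remove eq_neg_iff_add_eq_0)
    have "b0 = inverse (a b0) * (a b0 * b0)" using nz by simp
    also have "\<dots> = (\<Sum>b\<in>B - {b0}. (- a b * inverse (a b0)) * b)"
      unfolding eq by (simp add: sum_distrib_left sum_negf[symmetric] mult_ac)
    also have "\<dots> \<in> kspan K (B - {b0})"
      using a b0 kspan_superset[OF K, of "B - {b0}"] K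
      by (intro kspan_sum_closed[OF K])
        (auto intro!: subfield_mult_closed subfield_uminus_closed subfield_inverse_closed)
    finally have "B \<subseteq> kspan K (B - {b0})" using kspan_superset[OF K, of "B - {b0}"] by blast
    then have "kspan K B = kspan K (B - {b0})"
      using kspan_subset_kspan[OF K] kspan_mono[of "B - {b0}" B] by blast
    then have "card B \<le> card (B - {b0})" using PB by (intro min) (auto simp: P_def)
    then show False using card_Diff1_less[OF finite b0] by simp
  qed
  then show ?thesis using PB unfolding P_def by blast
qed

lemma card_kspan_image:
  fixes h :: "'i \<Rightarrow> 'a::{finite,field}"
  assumes K: "is_subfield K" and fin: "finite I"
    and indep: "\<And>a. \<forall>i\<in>I. a i \<in> K \<Longrightarrow> (\<Sum>i\<in>I. a i * h i) = 0 \<Longrightarrow> \<forall>i\<in>I. a i = 0"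
  shows "card (kspan K (h ` I)) = card K ^ card I"
proof -
  let ?comb = "\<lambda>a. \<Sum>i\<in>I. a i * h i"
  have span: "kspan K (h ` I) = ?comb ` (I \<rightarrow>\<^sub>E K)"
    unfolding kspan_image_eq[OF K fin]
  proof (rule equalityI; rule subsetI)
    fix x assume "x \<in> {?comb a | a. \<forall>i\<in>I. a i \<in> K}"
    then obtain a where x: "x = ?comb a" and a: "\<forall>i\<in>I. a i \<in> K" by blast
    have "x = ?comb (restrict a I)" unfolding x by (intro sum.cong) auto
    moreover have "restrict a I \<in> I \<rightarrow>\<^sub>E K" using a by simp
    ultimately show "x \<in> ?comb ` (I \<rightarrow>\<^sub>E K)" by (rule image_eqI)
  next
    fix x assume "x \<in> ?comb ` (I \<rightarrow>\<^sub>E K)"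
    then obtain a where "a \<in> I \<rightarrow>\<^sub>E K" "x = ?comb a" by blast
    then show "x \<in> {?comb a | a. \<forall>i\<in>I. a i \<in> K}" by (blast dest: PiE_mem)
  qed
  have "inj_on ?comb (I \<rightarrow>\<^sub>E K)"
  proof (rule inj_onI)
    fix a b assume a: "a \<in> I \<rightarrow>\<^sub>E K" and b: "b \<in> I \<rightarrow>\<^sub>E K" and "?comb a = ?comb b"
    then have "(\<Sum>i\<in>I. (a i - b i) * h i) = 0"
      by (simp add: left_diff_distrib sum_subtractf)
    moreover have "\<forall>i\<in>I. a i - b i \<in> K" using a b by (auto intro!: subfield_diff_closed[OF K])
    ultimately have "\<forall>i\<in>I. a i - b i = 0" by (rule indep[rotated])
    then show "a = b" using a b by (intro PiE_ext[OF a b]) auto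
  qed
  then show ?thesis using fin unfolding span by (simp add: card_image card_PiE)
qed

lemma card_kspan_kindep:
  fixes B :: "'a::{finite,field} set"
  assumes K: "is_subfield K" and "kindep K B"
  shows "card (kspan K B) = card K ^ card B"
proof -
  have "card (kspan K ((\<lambda>x. x) ` B)) = card K ^ card B"
    using assms(2) unfolding kindep_def by (intro card_kspan_image[OF K]) blast+
  then show ?thesis by simp
qed

lemma card_kspan_kdim:
  fixes S :: "'a::{finite,field} set"
  assumes K: "is_subfield K"
  shows "card (kspan K S) = card K ^ kdim K (kspan K S)"
proof -
  obtain B where B: "B \<subseteq> S" "kindep K B" "kspan K B = kspan K S"
    using exists_kindep_spanning_subset[OF K] by blast
  have "kdim K (kspan K S) = card B"
    unfolding kdim_def
  proof (rule the_equality)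
    show "\<exists>B'. B' \<subseteq> kspan K S \<and> kindep K B' \<and> kspan K B' = kspan K S \<and> card B' = card B"
      using B kspan_superset[OF K, of S] by blast
  next
    fix d assume "\<exists>B'. B' \<subseteq> kspan K S \<and> kindep K B' \<and> kspan K B' = kspan K S \<and> card B' = d"
    then obtain B' where "kindep K B'" "kspan K B' = kspan K S" "card B' = d" by blast
    then have "card K ^ d = card K ^ card B" using card_kspan_kindep[OF K] B by metis
    then show "d = card B" using one_less_card_subfield[OF K] by (simp add: power_inject_exp)
  qed
  then show ?thesis using card_kspan_kindep[OF K B(2)] B(3) by simp
qed

definition klinear :: "'a::field set \<Rightarrow> ('a \<Rightarrow> 'a) \<Rightarrow> bool" where
  "klinear K f \<longleftrightarrow> (\<forall>x y. f (x + y) = f x + f y) \<and> (\<forall>k\<in>K. \<forall>x. f (k * x) = k * f x)"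

lemma klinear_zero: "klinear K f \<Longrightarrow> f 0 = 0"
  unfolding klinear_def by (metis add_cancel_right_right add_0)

lemma klinear_diff: "klinear K f \<Longrightarrow> f (x - y) = f x - f y"
  unfolding klinear_def by (metis diff_add_cancel eq_diff_eq)

lemma klinear_sum:
  assumes "klinear K f" "\<And>i. i \<in> I \<Longrightarrow> a i \<in> K"
  shows "f (\<Sum>i\<in>I. a i * x i) = (\<Sum>i\<in>I. a i * f (x i))"
  using assms(2)
  by (induct I rule: infinite_finite_induct)
    (use assms(1) klinear_zero[OF assms(1)] in \<open>auto simp: klinear_def\<close>)

lemma kspan_klinear_image:
  assumes K: "is_subfield K" and f: "klinear K f" and fin: "finite I"
  shows "kspan K ((\<lambda>i. f (g i)) ` I) = f ` kspan K (g ` I)"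
  unfolding kspan_image_eq[OF K fin]
proof (rule equalityI; rule subsetI)
  fix y assume "y \<in> {\<Sum>i\<in>I. a i * f (g i) | a. \<forall>i\<in>I. a i \<in> K}"
  then obtain a where "y = (\<Sum>i\<in>I. a i * f (g i))" "\<forall>i\<in>I. a i \<in> K" by blast
  then have "y = f (\<Sum>i\<in>I. a i * g i)" "\<forall>i\<in>I. a i \<in> K" by (simp_all add: klinear_sum[OF f])
  then show "y \<in> f ` {\<Sum>i\<in>I. a i * g i | a. \<forall>i\<in>I. a i \<in> K}" by blast
next
  fix y assume "y \<in> f ` {\<Sum>i\<in>I. a i * g i | a. \<forall>i\<in>I. a i \<in> K}"
  then obtain a where "y = f (\<Sum>i\<in>I. a i * g i)" "\<forall>i\<in>I. a i \<in> K" by blast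
  then have "y = (\<Sum>i\<in>I. a i * f (g i))" "\<forall>i\<in>I. a i \<in> K" by (simp_all add: klinear_sum[OF f])
  then show "y \<in> {\<Sum>i\<in>I. a i * f (g i) | a. \<forall>i\<in>I. a i \<in> K}" by blast
qed

lemma card_le_card_image_mult_card_kernel:
  fixes f :: "'a::{finite,ab_group_add} \<Rightarrow> 'b::ab_group_add"
  assumes f: "\<And>x y. f (x - y) = f x - f y"
  shows "card V \<le> card (f ` V) * card {z. f z = 0}"
proof -
  have fiber: "card {x\<in>V. f x = y} \<le> card {z. f z = 0}" if "y \<in> f ` V" for y
  proof -
    obtain x0 where "x0 \<in> V" "y = f x0" using \<open>y \<in> f ` V\<close> by blast
    have "{x\<in>V. f x = y} \<subseteq> (\<lambda>z. x0 + z) ` {z. f z = 0}"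
    proof
      fix x assume "x \<in> {x\<in>V. f x = y}"
      then have "f (x - x0) = 0" using f \<open>y = f x0\<close> by simp
      then show "x \<in> (\<lambda>z. x0 + z) ` {z. f z = 0}" by (intro image_eqI[of _ _ "x - x0"]) auto
    qed
    then have "card {x\<in>V. f x = y} \<le> card ((\<lambda>z. x0 + z) ` {z. f z = 0})" by (intro card_mono) simp
    also have "\<dots> \<le> card {z. f z = 0}" by (rule card_image_le) simp
    finally show ?thesis .
  qed
  have "card V = card (\<Union>y\<in>f ` V. {x\<in>V. f x = y})" by (rule arg_cong[of _ _ card]) auto
  also have "\<dots> \<le> (\<Sum>y\<in>f ` V. card {x\<in>V. f x = y})" by (rule card_UN_le) simp
  also have "\<dots> \<le> (\<Sum>y\<in>f ` V. card {z. f z = 0})" by (rule sum_mono) (rule fiber)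
  finally show ?thesis by simp
qed

lemma card_kspan_family:
  fixes K :: "'a::{finite,field} set"
  assumes K: "is_subfield K" and indep: "kindep_family K n g"
  shows "card (kspan K (g ` {..<n})) = card K ^ n"
proof -
  have "card (kspan K (g ` {..<n})) = card K ^ card {..<n}"
    using indep unfolding kindep_family_def
    by (intro card_kspan_image[OF K finite_lessThan]) (simp add: lessThan_iff)
  then show ?thesis by simp
qed

lemma kindep_family_nonzero:
  assumes K: "is_subfield K" and indep: "kindep_family K n g" and i: "i < n"
  shows "g i \<noteq> 0"
proof
  assume "g i = 0"
  define e :: "nat \<Rightarrow> 'a" where "e j = (if j = i then 1 else 0)" for j
  have "(\<Sum>j<n. e j * g j) = (\<Sum>j<n. if j = i then g j else 0)"
    unfolding e_def by (intro sum.cong) auto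
  also have "\<dots> = 0" using i \<open>g i = 0\<close> by simp
  finally have "(\<Sum>j<n. e j * g j) = 0" .
  moreover have "0 \<in> K" "1 \<in> K" using K unfolding is_subfield_def by blast+
  then have "\<forall>j<n. e j \<in> K" by (simp add: e_def)
  ultimately have "\<forall>j<n. e j = 0" using indep unfolding kindep_family_def by blast
  then have "e i = 0" using i by blast
  then show False by (simp add: e_def)
qed

lemma card_klinear_image_kspan:
  fixes K :: "'a::{finite,field} set" and n :: nat
  assumes K: "is_subfield K" and f: "klinear K f"
  shows "card (f ` kspan K (g ` {..<n})) = card K ^ kdim K (kspan K ((\<lambda>i. f (g i)) ` {..<n}))"
proof -
  have "f ` kspan K (g ` {..<n}) = kspan K ((\<lambda>i. f (g i)) ` {..<n})"
    by (rule kspan_klinear_image[OF K f, symmetric]) simp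
  then show ?thesis by (simp only: card_kspan_kdim[OF K])
qed

lemma kdim_klinear_image_ge:
  fixes K :: "'a::{finite,field} set"
  assumes K: "is_subfield K" and f: "klinear K f" and ker: "card {z. f z = 0} \<le> card K"
    and indep: "kindep_family K n g"
  shows "n - 1 \<le> kdim K (kspan K ((\<lambda>i. f (g i)) ` {..<n}))" (is "_ \<le> ?r")
proof -
  let ?V = "kspan K (g ` {..<n})"
  have "card K ^ n = card ?V" using card_kspan_family[OF K indep] by simp
  also have "\<dots> \<le> card (f ` ?V) * card {z. f z = 0}"
    by (rule card_le_card_image_mult_card_kernel) (rule klinear_diff[OF f])
  also have "\<dots> \<le> card K ^ ?r * card K"
    unfolding card_klinear_image_kspan[OF K f] using ker by (rule mult_left_mono) simp
  also have "\<dots> = card K ^ Suc ?r" by simp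
  finally have "n \<le> Suc ?r" using one_less_card_subfield[OF K] power_le_imp_le_exp by blast
  then show ?thesis by simp
qed

lemma kdim_klinear_image_less:
  fixes K :: "'a::{finite,field} set"
  assumes K: "is_subfield K" and f: "klinear K f" and indep: "kindep_family K n g"
    and i: "i < n" and root: "f (g i) = 0"
  shows "kdim K (kspan K ((\<lambda>i. f (g i)) ` {..<n})) < n" (is "?r < n")
proof -
  let ?V = "kspan K (g ` {..<n})"
  have "g i \<in> ?V" using i kspan_superset[OF K, of "g ` {..<n}"] by blast
  moreover have "g i \<noteq> 0" by (rule kindep_family_nonzero[OF K indep i])
  ultimately have "\<not> inj_on f ?V"
    using kspan_zero root klinear_zero[OF f] by (metis inj_onD)
  then have "card (f ` ?V) < card ?V"
    using card_image_le[of ?V f] inj_on_iff_eq_card[of ?V f] by fastforce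
  then have "card K ^ ?r < card K ^ n"
    unfolding card_klinear_image_kspan[OF K f] card_kspan_family[OF K indep] .
  then show ?thesis using one_less_card_subfield[OF K] power_less_imp_less_exp by blast
qed

lemma CHAR_eq_if_card_prime_power:
  assumes "prime p" "card (UNIV :: 'a::{finite,field} set) = p ^ e" "e > 0"
  shows "CHAR('a) = p"
proof -
  have "prime CHAR('a)" by (rule prime_CHAR_semidom) (simp add: finite_imp_CHAR_pos)
  moreover have "CHAR('a) dvd p ^ e" using CHAR_dvd_CARD[where 'a='a] assms(2) by simp
  ultimately show ?thesis using assms(1) prime_dvd_power primes_dvd_imp_eq by metis
qed

lemma klinear_power_plus_scalar:
  fixes K :: "'a::field set"
  assumes "prime CHAR('a)" "Q = CHAR('a) ^ e" and fixed: "\<And>k. k \<in> K \<Longrightarrow> k ^ Q = k"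
  shows "klinear K (\<lambda>z. z ^ Q + a * z)"
  unfolding klinear_def
proof (intro conjI allI ballI)
  fix x y :: 'a
  show "(x + y) ^ Q + a * (x + y) = (x ^ Q + a * x) + (y ^ Q + a * y)"
    using freshmans_dream'[OF assms(1,2), of x y] by (simp add: algebra_simps)
next
  fix k x :: 'a assume "k \<in> K"
  then show "(k * x) ^ Q + a * (k * x) = k * (x ^ Q + a * x)"
    using fixed by (simp add: power_mult_distrib algebra_simps)
qed

lemma klinear_power_card_square_plus_scalar:
  fixes K :: "'a::{finite,field} set"
  assumes K: "is_subfield K" and "card K = q" "card (UNIV :: 'a set) = q ^ m" "m > 0"
    and "prime p" "r > 0" "q = p ^ r"
  shows "klinear K (\<lambda>z. z ^ (q ^ 2) + a * z)"
proof (rule klinear_power_plus_scalar)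
  have "CHAR('a) = p"
    using assms by (intro CHAR_eq_if_card_prime_power[where e = "r * m"]) (simp_all add: power_mult)
  then show "prime CHAR('a)" "q ^ 2 = CHAR('a) ^ (r * 2)" using assms by (simp_all add: power_mult)
  show "k ^ (q ^ 2) = k" if "k \<in> K" for k
    using subfield_power_card[OF K that] assms(2) by (simp add: power2_eq_square power_mult)
qed

lemma power_eq_self_if_odd:
  fixes t :: "'a::comm_monoid_mult"
  assumes sq: "t ^ (q ^ 2) = t" and "t ^ (q ^ m) = t" "odd m"
  shows "t ^ q = t"
proof -
  obtain j where m: "m = Suc (2 * j)" using \<open>odd m\<close> oddE by fastforce
  have even: "t ^ (q ^ (2 * i)) = t" for i
  proof (induct i)
    case (Suc i)
    have "t ^ (q ^ (2 * Suc i)) = (t ^ (q ^ 2)) ^ (q ^ (2 * i))"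
      by (simp only: mult_Suc_right power_add power_mult)
    then show ?case using Suc sq by simp
  qed simp
  have "t ^ (q ^ m) = (t ^ (q ^ (2 * j))) ^ q"
    unfolding m by (simp only: power_Suc2 power_mult)
  then have "t = (t ^ (q ^ (2 * j))) ^ q" using \<open>t ^ (q ^ m) = t\<close> by simp
  then show ?thesis using even by simp
qed

lemma card_power_eq_self_le:
  assumes "1 < q"
  shows "card {t::'a::idom. t ^ q = t} \<le> q"
proof -
  define p :: "'a poly" where "p = Polynomial.monom 1 q - [:0, 1:]"
  have "Polynomial.coeff p q = 1"
    using assms unfolding p_def by (simp add: coeff_monom coeff_pCons split: nat.split)
  then have "p \<noteq> 0" by auto
  moreover have "degree p \<le> q"
    unfolding p_def using assms degree_diff_le_max[of "Polynomial.monom (1::'a) q" "[:0, 1:]"]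
    by (simp add: degree_monom_eq)
  moreover have "{t::'a. t ^ q = t} = {t. poly p t = 0}" by (simp add: p_def poly_monom)
  ultimately show ?thesis using card_poly_roots_bound[of p] by simp
qed

lemma card_kernel_power_plus_scalar_le:
  fixes a :: "'a::{finite,field}"
  assumes q: "1 < q" and card: "card (UNIV :: 'a set) = q ^ m" and "odd m"
  shows "card {z::'a. z ^ (q ^ 2) + a * z = 0} \<le> q"
proof (cases "\<exists>z0. z0 \<noteq> 0 \<and> z0 ^ (q ^ 2) + a * z0 = 0")
  case False
  then have "{z::'a. z ^ (q ^ 2) + a * z = 0} \<subseteq> {0}" by auto
  then have "card {z::'a. z ^ (q ^ 2) + a * z = 0} \<le> card {0::'a}" by (intro card_mono) simp_all
  then show ?thesis using q by simp
next
  case True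
  then obtain z0 where z0: "z0 \<noteq> 0" "z0 ^ (q ^ 2) = - (a * z0)"
    by (auto simp: eq_neg_iff_add_eq_0)
  then have "a \<noteq> 0" by auto
  have "{z. z ^ (q ^ 2) + a * z = 0} \<subseteq> (\<lambda>t. z0 * t) ` {t. t ^ q = t}"
  proof
    fix z assume "z \<in> {z. z ^ (q ^ 2) + a * z = 0}"
    then have z: "z ^ (q ^ 2) = - (a * z)" by (simp add: eq_neg_iff_add_eq_0)
    have "(z / z0) ^ (q ^ 2) = - (a * z) / - (a * z0)" by (simp only: power_divide z z0(2))
    also have "\<dots> = z / z0" using \<open>a \<noteq> 0\<close> by simp
    finally have "(z / z0) ^ (q ^ 2) = z / z0" .
    moreover have "(z / z0) ^ (q ^ m) = z / z0" using power_card_UNIV[of "z / z0"] card by simp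
    ultimately have "(z / z0) ^ q = z / z0" by (rule power_eq_self_if_odd[OF _ _ \<open>odd m\<close>])
    then show "z \<in> (\<lambda>t. z0 * t) ` {t. t ^ q = t}" using z0 by (intro image_eqI[of _ _ "z / z0"]) auto
  qed
  then have "card {z. z ^ (q ^ 2) + a * z = 0} \<le> card ((\<lambda>t. z0 * t) ` {t. t ^ q = t})"
    by (intro card_mono) simp_all
  also have "\<dots> \<le> card {t::'a. t ^ q = t}" by (rule card_image_le) simp
  also have "\<dots> \<le> q" by (rule card_power_eq_self_le[OF q])
  finally show ?thesis .
qed

lemma rank_dist_code_gabidulin_1:
  "rank_dist_code K n u (gabidulin q n 1 g) = Min (range (\<lambda>x. rank_dist K n u (\<lambda>i. x * g i)))"
proof -
  have "gabidulin q n 1 g = range (\<lambda>x i. x * g i)" unfolding gabidulin_def by auto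
  then show ?thesis unfolding rank_dist_code_def by (simp add: image_image)
qed

theorem proposition6:
  fixes K :: "'a::{finite,field} set" and q m n :: nat and g :: "nat \<Rightarrow> 'a" and c :: 'a
  assumes "is_subfield K" and "card K = q" and "card (UNIV :: 'a set) = q ^ m"
    and "\<exists>p r. prime p \<and> r > 0 \<and> q = p ^ r"
    and "odd m" and "3 \<le> n" and "n \<le> m"
    and "kindep_family K n g"
  shows "rank_dist_code K n (\<lambda>i. g i ^ (q ^ 2) + c * g i) (gabidulin q n 1 g) = n - 1"
proof -
  note K = assms(1) and indep = assms(8)
  define R where "R a = kdim K (kspan K ((\<lambda>i. g i ^ (q ^ 2) + a * g i) ` {..<n}))" for a
  have q: "1 < q" using one_less_card_subfield[OF K] assms(2) by simp
  obtain p r where p: "prime p" "r > 0" "q = p ^ r" using assms(4) by blast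
  have L: "klinear K (\<lambda>z. z ^ (q ^ 2) + a * z)" for a
    using assms(6,7) by (intro klinear_power_card_square_plus_scalar[OF K assms(2,3) _ p]) simp
  have ge: "n - 1 \<le> R a" for a
    unfolding R_def using assms(2) card_kernel_power_plus_scalar_le[OF q assms(3,5)]
    by (intro kdim_klinear_image_ge[OF K L _ indep]) simp
  define a0 where "a0 = - (g 0 ^ (q ^ 2) / g 0)"
  have "R a0 < n"
    unfolding R_def using kindep_family_nonzero[OF K indep] assms(6)
    by (intro kdim_klinear_image_less[OF K L indep, of 0]) (simp_all add: a0_def)
  have dist: "rank_dist K n (\<lambda>i. g i ^ (q ^ 2) + c * g i) (\<lambda>i. x * g i) = R (c - x)" for x
    unfolding rank_dist_def R_def by (simp add: algebra_simps)
  show ?thesis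
    unfolding rank_dist_code_gabidulin_1 dist
  proof (rule Min_eqI)
    show "y \<in> range (\<lambda>x. R (c - x)) \<Longrightarrow> n - 1 \<le> y" for y using ge by blast
    show "n - 1 \<in> range (\<lambda>x. R (c - x))"
      using ge[of a0] \<open>R a0 < n\<close> by (intro image_eqI[of _ _ "c - a0"]) simp_all
  qed simp
qed

end
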